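(* Let $I=(c,d)$ and $J$ be open intervals of $\mathbb{R}$ with $c\in\mathbb{R}$, let $O=I\times J$, and let $L:O\to\mathbb{R}$, $(x,y)\mapsto L(x,y)$, be of class $C^1$. Let $a<b$, $\alpha,\beta\in\mathbb{R}$, and let $X$ be the set of all $\gamma\in C([a,b])$ which are continuously differentiable on $(a,b]$, satisfy $(\gamma(t),\gamma'(t))\in O$ for all $t\in(a,b]$, $\gamma(a)=\alpha$, $\gamma(b)=\beta$, and for which the (possibly improper) integral $\mathcal{L}(\gamma)=\int_a^b L(\gamma(t),\gamma'(t))\,dt$ is defined. Suppose that $L$ is convex (resp. strictly convex) on $O$, that $\frac{\partial L}{\partial y}$ is bounded on $O$, and that $\gamma\in X$ satisfies the Euler–Lagrange equation $$\frac{\partial L}{\partial x}(\gamma(t),\gamma'(t))=\frac{d}{dt}\,\frac{\partial L}{\partial y}(\gamma(t),\gamma'(t))\quad\text{for all } t\in(a,b].$$ Then $\gamma$ is a minimum (resp. the unique minimum) of $\mathcal{L}$ on $X$.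
   Context: $L$ is called convex on $O$ if for all $x\in O$ and $h\in\mathbb{R}^2$ with $x+h\in O$, one has $L(x+h)-L(x)\ge \frac{\partial L}{\partial x_1}(x)h_1+\frac{\partial L}{\partial x_2}(x)h_2$; it is strictly convex if, in addition, equality holds only when $h=0$. *)

theory Defs
  imports "HOL-Analysis.Analysis"
begin

definition C1_on :: "(real \<times> real) set \<Rightarrow> (real \<times> real \<Rightarrow> real)
    \<Rightarrow> (real \<times> real \<Rightarrow> real) \<Rightarrow> (real \<times> real \<Rightarrow> real) \<Rightarrow> bool" where
  "C1_on Om L Lx Ly \<longleftrightarrow>
     (\<forall>p\<in>Om. (L has_derivative (\<lambda>h. Lx p * fst h + Ly p * snd h)) (at p))
     \<and> continuous_on Om Lx \<and> continuous_on Om Ly"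

definition convex_L :: "(real \<times> real) set \<Rightarrow> (real \<times> real \<Rightarrow> real)
    \<Rightarrow> (real \<times> real \<Rightarrow> real) \<Rightarrow> (real \<times> real \<Rightarrow> real) \<Rightarrow> bool" where
  "convex_L Om L Lx Ly \<longleftrightarrow>
     (\<forall>x\<in>Om. \<forall>h. x + h \<in> Om \<longrightarrow>
        L (x + h) - L x \<ge> Lx x * fst h + Ly x * snd h)"

definition strictly_convex_L :: "(real \<times> real) set \<Rightarrow> (real \<times> real \<Rightarrow> real)
    \<Rightarrow> (real \<times> real \<Rightarrow> real) \<Rightarrow> (real \<times> real \<Rightarrow> real) \<Rightarrow> bool" where
  "strictly_convex_L Om L Lx Ly \<longleftrightarrow> convex_L Om L Lx Ly \<and>
     (\<forall>x\<in>Om. \<forall>h. x + h \<in> Om \<longrightarrow>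
        L (x + h) - L x = Lx x * fst h + Ly x * snd h \<longrightarrow> h = 0)"

definition dgam :: "real \<Rightarrow> real \<Rightarrow> (real \<Rightarrow> real) \<Rightarrow> real \<Rightarrow> real" where
  "dgam a b \<gamma> t = vector_derivative \<gamma> (at t within {a<..b})"

definition improper_int_has :: "real \<Rightarrow> real \<Rightarrow> (real \<Rightarrow> real) \<Rightarrow> real \<Rightarrow> bool" where
  "improper_int_has a b f I \<longleftrightarrow> ((\<lambda>s. integral {s..b} f) \<longlongrightarrow> I) (at_right a)"

definition action :: "real \<Rightarrow> real \<Rightarrow> (real \<times> real \<Rightarrow> real) \<Rightarrow> (real \<Rightarrow> real) \<Rightarrow> real" where
  "action a b L \<gamma> = Lim (at_right a) (\<lambda>s. integral {s..b} (\<lambda>t. L (\<gamma> t, dgam a b \<gamma> t)))"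

definition admissible :: "real \<Rightarrow> real \<Rightarrow> real \<Rightarrow> real \<Rightarrow> (real \<times> real) set
    \<Rightarrow> (real \<times> real \<Rightarrow> real) \<Rightarrow> (real \<Rightarrow> real) set" where
  "admissible a b \<alpha> \<beta> Om L = {\<gamma>.
     continuous_on {a..b} \<gamma>
     \<and> (\<forall>t\<in>{a<..b}. \<gamma> differentiable (at t within {a<..b}))
     \<and> continuous_on {a<..b} (dgam a b \<gamma>)
     \<and> (\<forall>t\<in>{a<..b}. (\<gamma> t, dgam a b \<gamma> t) \<in> Om)
     \<and> \<gamma> a = \<alpha> \<and> \<gamma> b = \<beta>
     \<and> (\<exists>I. improper_int_has a b (\<lambda>t. L (\<gamma> t, dgam a b \<gamma> t)) I)}"

end

theory Submission
  imports Defs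
begin

text \<open>Compare \<gamma> with an admissible \<eta> through the pointwise convexity gap
  \<open>G = L(\<eta>,\<eta>') - L(\<gamma>,\<gamma>') - L\<^sub>x(\<gamma>,\<gamma>')(\<eta>-\<gamma>) - L\<^sub>y(\<gamma>,\<gamma>')(\<eta>'-\<gamma>') \<ge> 0\<close>.
  By the Euler--Lagrange equation the subtracted linear part is the derivative of
  \<open>P = L\<^sub>y(\<gamma>,\<gamma>')(\<eta>-\<gamma>)\<close>, and \<open>P(b) = 0\<close>, so \<open>\<integral>\<^sub>s\<^sup>b G\<close> differs from
  \<open>\<integral>\<^sub>s\<^sup>b L(\<eta>,\<eta>') - \<integral>\<^sub>s\<^sup>b L(\<gamma>,\<gamma>')\<close> only by \<open>P(s)\<close>, which tends to \<open>0\<close> as \<open>s \<rightarrow> a\<close> because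
  \<open>L\<^sub>y\<close> is bounded and \<open>\<eta>(a) = \<gamma>(a)\<close>. Hence \<open>\<L>(\<eta>) - \<L>(\<gamma>)\<close> is the improper integral of \<open>G \<ge> 0\<close>;
  if it vanishes, the continuous \<open>G\<close> vanishes on \<open>(a,b]\<close> and strict convexity gives \<open>\<eta> = \<gamma>\<close>.\<close>

definition convexity_gap :: "(real \<times> real \<Rightarrow> real) \<Rightarrow> (real \<times> real \<Rightarrow> real)
    \<Rightarrow> (real \<times> real \<Rightarrow> real) \<Rightarrow> real \<times> real \<Rightarrow> real \<times> real \<Rightarrow> real" where
  "convexity_gap L Lx Ly p q = L q - L p - (Lx p * fst (q - p) + Ly p * snd (q - p))"

lemma convexity_gap_nonneg:
  assumes "convex_L Om L Lx Ly" "p \<in> Om" "q \<in> Om"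
  shows "0 \<le> convexity_gap L Lx Ly p q"
proof -
  have "\<forall>h. p + h \<in> Om \<longrightarrow> L (p + h) - L p \<ge> Lx p * fst h + Ly p * snd h"
    using assms(1,2) unfolding convex_L_def by blast
  from this[rule_format, of "q - p"] show ?thesis
    using assms(3) by (simp add: convexity_gap_def)
qed

lemma convexity_gap_eq_0_imp_eq:
  assumes "strictly_convex_L Om L Lx Ly" "p \<in> Om" "q \<in> Om"
    and "convexity_gap L Lx Ly p q = 0"
  shows "q = p"
proof -
  have "\<forall>h. p + h \<in> Om \<longrightarrow> L (p + h) - L p = Lx p * fst h + Ly p * snd h \<longrightarrow> h = 0"
    using assms(1,2) unfolding strictly_convex_L_def by blast
  from this[rule_format, of "q - p"] show ?thesis
    using assms(3,4) by (simp add: convexity_gap_def)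
qed

lemma C1_on_continuous_on:
  assumes "C1_on Om L Lx Ly"
  shows "continuous_on Om L" "continuous_on Om Lx" "continuous_on Om Ly"
  using assms unfolding C1_on_def
  by (meson continuous_at_imp_continuous_on has_derivative_continuous)+

lemma integral_Icc_antimono_left:
  fixes f :: "real \<Rightarrow> real"
  assumes "f integrable_on {r..b}" "r \<le> s" "s \<le> b" "\<forall>t\<in>{r..s}. 0 \<le> f t"
  shows "integral {s..b} f \<le> integral {r..b} f"
proof -
  have "0 \<le> integral {r..s} f"
    using assms by (intro integral_nonneg integrable_subinterval_real[OF assms(1)]) auto
  moreover have "integral {r..s} f + integral {s..b} f = integral {r..b} f"
    using assms(1-3) by (intro Henstock_Kurzweil_Integration.integral_combine)
  ultimately show ?thesis by linarith
qed

context
  fixes f :: "real \<Rightarrow> real" and a b I :: real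
  assumes ab: "a < b"
    and cont: "continuous_on {a<..b} f"
    and nonneg: "\<forall>t\<in>{a<..b}. 0 \<le> f t"
    and lim: "((\<lambda>s. integral {s..b} f) \<longlongrightarrow> I) (at_right a)"
begin

private lemma integrable_on_Icc: "s \<in> {a<..b} \<Longrightarrow> f integrable_on {s..b}"
  by (rule integrable_continuous_interval, rule continuous_on_subset[OF cont]) auto

lemma improper_integral_ge_integral: "s \<in> {a<..b} \<Longrightarrow> integral {s..b} f \<le> I"
proof (rule tendsto_lowerbound[OF lim _ trivial_limit_at_right_real])
  assume s: "s \<in> {a<..b}"
  have "eventually (\<lambda>r. r \<in> {a<..s}) (at_right a)"
    using s by (auto simp: eventually_at_right_field intro!: exI[of _ s])
  then show "eventually (\<lambda>r. integral {s..b} f \<le> integral {r..b} f) (at_right a)"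
    by (rule eventually_mono)
      (use s nonneg in \<open>auto intro!: integral_Icc_antimono_left integrable_on_Icc\<close>)
qed

lemma improper_integral_nonneg: "0 \<le> I"
proof -
  have "0 \<le> integral {b..b} f" by simp
  also have "\<dots> \<le> I" using ab by (intro improper_integral_ge_integral) auto
  finally show ?thesis .
qed

lemma improper_integral_nonpos_imp_zero:
  assumes "I \<le> 0" "t \<in> {a<..b}"
  shows "f t = 0"
proof -
  define s where "s = (a + t) / 2"
  have s: "s \<in> {a<..b}" "s < t" using assms(2) unfolding s_def by auto
  have "integral {s..b} f \<le> 0"
    using improper_integral_ge_integral[OF s(1)] assms(1) by linarith
  moreover have "0 \<le> integral {s..b} f"
    using s(1) nonneg by (intro integral_nonneg integrable_on_Icc) auto
  ultimately have "integral (cbox s b) f = 0" by simp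
  moreover have "continuous_on (cbox s b) f"
    using s(1) by (intro continuous_on_subset[OF cont]) auto
  moreover have "box s b \<noteq> {}" using s assms(2) by auto
  moreover have "\<forall>x\<in>cbox s b. 0 \<le> f x" using s(1) nonneg by auto
  ultimately have "\<forall>x\<in>cbox s b. f x = 0"
    using integral_cbox_eq_0_iff by blast
  then show ?thesis using s assms(2) by simp
qed

end

lemma admissible_has_real_derivative:
  assumes "\<eta> \<in> admissible a b \<alpha> \<beta> Om L" "t \<in> {a<..b}"
  shows "(\<eta> has_real_derivative dgam a b \<eta> t) (at t within {a<..b})"
  using assms unfolding admissible_def dgam_def
  by (simp add: vector_derivative_works has_real_derivative_iff_has_vector_derivative)

lemma continuous_on_along_admissible:
  assumes "continuous_on Om F" "\<eta> \<in> admissible a b \<alpha> \<beta> Om L"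
  shows "continuous_on {a<..b} (\<lambda>t. F (\<eta> t, dgam a b \<eta> t))"
proof (rule continuous_on_compose2[OF assms(1)])
  show "continuous_on {a<..b} (\<lambda>t. (\<eta> t, dgam a b \<eta> t))"
    using assms(2) unfolding admissible_def
    by (auto intro!: continuous_on_Pair intro: continuous_on_subset)
  show "(\<lambda>t. (\<eta> t, dgam a b \<eta> t)) ` {a<..b} \<subseteq> Om"
    using assms(2) unfolding admissible_def by auto
qed

lemma integral_tendsto_action:
  assumes "\<eta> \<in> admissible a b \<alpha> \<beta> Om L"
  shows "((\<lambda>s. integral {s..b} (\<lambda>t. L (\<eta> t, dgam a b \<eta> t))) \<longlongrightarrow> action a b L \<eta>) (at_right a)"
proof -
  obtain I where I: "((\<lambda>s. integral {s..b} (\<lambda>t. L (\<eta> t, dgam a b \<eta> t))) \<longlongrightarrow> I) (at_right a)"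
    using assms unfolding admissible_def improper_int_has_def by blast
  moreover have "action a b L \<eta> = I"
    unfolding action_def using tendsto_Lim[OF trivial_limit_at_right_real I] .
  ultimately show ?thesis by simp
qed

locale admissible_variation =
  fixes Om :: "(real \<times> real) set" and L Lx Ly :: "real \<times> real \<Rightarrow> real"
    and a b \<alpha> \<beta> :: real and \<gamma> \<eta> :: "real \<Rightarrow> real"
  assumes C1: "C1_on Om L Lx Ly"
    and \<gamma>: "\<gamma> \<in> admissible a b \<alpha> \<beta> Om L"
    and \<eta>: "\<eta> \<in> admissible a b \<alpha> \<beta> Om L"
    and EL: "\<forall>t\<in>{a<..b}.
       ((\<lambda>s. Ly (\<gamma> s, dgam a b \<gamma> s)) has_real_derivative Lx (\<gamma> t, dgam a b \<gamma> t))
         (at t within {a<..b})"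
begin

definition gap :: "real \<Rightarrow> real" where
  "gap t = convexity_gap L Lx Ly (\<gamma> t, dgam a b \<gamma> t) (\<eta> t, dgam a b \<eta> t)"

definition boundary_term :: "real \<Rightarrow> real" where
  "boundary_term t = Ly (\<gamma> t, dgam a b \<gamma> t) * (\<eta> t - \<gamma> t)"

abbreviation L_along where "L_along \<zeta> \<equiv> \<lambda>t. L (\<zeta> t, dgam a b \<zeta> t)"

lemma continuous_on_gap: "continuous_on {a<..b} gap"
proof -
  note cont = C1_on_continuous_on[OF C1]
  have sub: "{a<..b} \<subseteq> {a..b}" by auto
  have curve: "continuous_on {a<..b} \<zeta>" "continuous_on {a<..b} (dgam a b \<zeta>)"
    if "\<zeta> \<in> admissible a b \<alpha> \<beta> Om L" for \<zeta>
    using that continuous_on_subset[OF _ sub] unfolding admissible_def by auto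
  show ?thesis
    unfolding gap_def convexity_gap_def fst_diff snd_diff prod.sel
    by (intro continuous_on_diff continuous_on_add continuous_on_mult curve[OF \<gamma>] curve[OF \<eta>]
        continuous_on_along_admissible[OF cont(1) \<gamma>] continuous_on_along_admissible[OF cont(1) \<eta>]
        continuous_on_along_admissible[OF cont(2) \<gamma>] continuous_on_along_admissible[OF cont(3) \<gamma>])
qed

lemma has_derivative_boundary_term:
  assumes "t \<in> {a<..b}"
  shows "(boundary_term has_real_derivative L_along \<eta> t - L_along \<gamma> t - gap t)
    (at t within {a<..b})"
proof -
  have "((\<lambda>t. \<eta> t - \<gamma> t) has_real_derivative dgam a b \<eta> t - dgam a b \<gamma> t)
      (at t within {a<..b})"
    using assms by (intro DERIV_diff admissible_has_real_derivative[OF \<eta>]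
        admissible_has_real_derivative[OF \<gamma>])
  from DERIV_mult[OF EL[rule_format, OF assms] this] show ?thesis
    unfolding boundary_term_def
    by (rule DERIV_cong) (simp add: gap_def convexity_gap_def)
qed

lemma integral_gap:
  assumes s: "s \<in> {a<..b}"
  shows "integral {s..b} gap
    = integral {s..b} (L_along \<eta>) - integral {s..b} (L_along \<gamma>) + boundary_term s"
proof -
  have sub: "{s..b} \<subseteq> {a<..b}" using s by auto
  have integral: "(L_along \<zeta> has_integral integral {s..b} (L_along \<zeta>)) {s..b}"
    if "\<zeta> \<in> admissible a b \<alpha> \<beta> Om L" for \<zeta>
    using continuous_on_along_admissible[OF C1_on_continuous_on(1)[OF C1] that]
    by (intro integrable_integral integrable_continuous_interval continuous_on_subset[OF _ sub])
  have "((\<lambda>t. L_along \<eta> t - L_along \<gamma> t - gap t)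
      has_integral boundary_term b - boundary_term s) {s..b}"
  proof (rule fundamental_theorem_of_calculus)
    fix t assume "t \<in> {s..b}"
    with sub have "(boundary_term has_real_derivative L_along \<eta> t - L_along \<gamma> t - gap t)
        (at t within {s..b})"
      by (blast intro: DERIV_subset has_derivative_boundary_term)
    then show "(boundary_term has_vector_derivative L_along \<eta> t - L_along \<gamma> t - gap t)
        (at t within {s..b})"
      by (simp add: has_real_derivative_iff_has_vector_derivative)
  qed (use s in auto)
  moreover have "boundary_term b = 0"
    using \<gamma> \<eta> unfolding admissible_def boundary_term_def by simp
  ultimately have "(gap has_integral
      integral {s..b} (L_along \<eta>) - integral {s..b} (L_along \<gamma>) + boundary_term s) {s..b}"
    using has_integral_diff[OF has_integral_diff[OF integral[OF \<eta>] integral[OF \<gamma>]]]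
    by fastforce
  then show ?thesis by (rule integral_unique)
qed

lemma boundary_term_tendsto_0:
  assumes Ly_bdd: "\<forall>p\<in>Om. \<bar>Ly p\<bar> \<le> M" and ab: "a < b"
  shows "(boundary_term \<longlongrightarrow> 0) (at_right a)"
proof (rule tendsto_0_le)
  have "continuous_on {a..b} (\<lambda>t. \<eta> t - \<gamma> t)"
    using \<gamma> \<eta> unfolding admissible_def by (intro continuous_on_diff) auto
  then have "((\<lambda>t. \<eta> t - \<gamma> t) \<longlongrightarrow> \<eta> a - \<gamma> a) (at a within {a..b})"
    using ab unfolding continuous_on_def by simp
  then have "((\<lambda>t. \<eta> t - \<gamma> t) \<longlongrightarrow> \<eta> a - \<gamma> a) (at_right a)"
    using ab by (simp add: at_within_Icc_at_right)
  then show "((\<lambda>t. \<eta> t - \<gamma> t) \<longlongrightarrow> 0) (at_right a)"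
    using \<gamma> \<eta> unfolding admissible_def by simp
  have "eventually (\<lambda>t. t \<in> {a<..b}) (at_right a)"
    using ab by (auto simp: eventually_at_right_field intro!: exI[of _ b])
  then show "eventually (\<lambda>t. norm (boundary_term t) \<le> norm (\<eta> t - \<gamma> t) * M) (at_right a)"
  proof (rule eventually_mono)
    fix t assume "t \<in> {a<..b}"
    then have "\<bar>Ly (\<gamma> t, dgam a b \<gamma> t)\<bar> \<le> M"
      using Ly_bdd \<gamma> unfolding admissible_def by auto
    then have "\<bar>Ly (\<gamma> t, dgam a b \<gamma> t)\<bar> * \<bar>\<eta> t - \<gamma> t\<bar> \<le> M * \<bar>\<eta> t - \<gamma> t\<bar>"
      by (rule mult_right_mono) simp
    then show "norm (boundary_term t) \<le> norm (\<eta> t - \<gamma> t) * M"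
      unfolding boundary_term_def by (simp add: abs_mult mult.commute)
  qed
qed

lemma integral_gap_tendsto_action_diff:
  assumes "\<forall>p\<in>Om. \<bar>Ly p\<bar> \<le> M" "a < b"
  shows "((\<lambda>s. integral {s..b} gap) \<longlongrightarrow> action a b L \<eta> - action a b L \<gamma>) (at_right a)"
proof -
  have "((\<lambda>s. integral {s..b} (L_along \<eta>) - integral {s..b} (L_along \<gamma>) + boundary_term s)
      \<longlongrightarrow> action a b L \<eta> - action a b L \<gamma> + 0) (at_right a)"
    by (intro tendsto_add tendsto_diff integral_tendsto_action[OF \<eta>]
        integral_tendsto_action[OF \<gamma>] boundary_term_tendsto_0[OF assms])
  moreover have "eventually (\<lambda>s. integral {s..b} (L_along \<eta>) - integral {s..b} (L_along \<gamma>)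
      + boundary_term s = integral {s..b} gap) (at_right a)"
    using assms(2) by (auto simp: eventually_at_right_field integral_gap
        intro!: exI[of _ b])
  ultimately show ?thesis
    by (simp add: tendsto_cong)
qed

lemma curves_in_Om:
  assumes "t \<in> {a<..b}"
  shows "(\<gamma> t, dgam a b \<gamma> t) \<in> Om" "(\<eta> t, dgam a b \<eta> t) \<in> Om"
  using assms \<gamma> \<eta> unfolding admissible_def by auto

lemma action_le_action:
  assumes "convex_L Om L Lx Ly" "\<forall>p\<in>Om. \<bar>Ly p\<bar> \<le> M" "a < b"
  shows "action a b L \<gamma> \<le> action a b L \<eta>"
proof -
  have "\<forall>t\<in>{a<..b}. 0 \<le> gap t"
    using curves_in_Om by (auto simp: gap_def intro!: convexity_gap_nonneg[OF assms(1)])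
  from improper_integral_nonneg[OF assms(3) continuous_on_gap this
      integral_gap_tendsto_action_diff[OF assms(2,3)]]
  show ?thesis by simp
qed

lemma eq_if_action_le_action:
  assumes strict: "strictly_convex_L Om L Lx Ly" and "\<forall>p\<in>Om. \<bar>Ly p\<bar> \<le> M" "a < b"
    and "action a b L \<eta> \<le> action a b L \<gamma>" and t: "t \<in> {a..b}"
  shows "\<eta> t = \<gamma> t"
proof (cases "t = a")
  case True
  then show ?thesis using \<gamma> \<eta> unfolding admissible_def by simp
next
  case False
  with t have t: "t \<in> {a<..b}" by simp
  have "\<forall>t\<in>{a<..b}. 0 \<le> gap t"
    using strict curves_in_Om
    by (auto simp: gap_def strictly_convex_L_def intro!: convexity_gap_nonneg)
  from improper_integral_nonpos_imp_zero[OF assms(3) continuous_on_gap this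
      integral_gap_tendsto_action_diff[OF assms(2,3)] _ t] assms(4)
  have "gap t = 0" by simp
  then have "(\<eta> t, dgam a b \<eta> t) = (\<gamma> t, dgam a b \<gamma> t)"
    using curves_in_Om[OF t] unfolding gap_def by (intro convexity_gap_eq_0_imp_eq[OF strict])
  then show ?thesis by simp
qed

end

theorem proposition2:
  fixes c :: real and d :: ereal and J :: "real set"
    and L Lx Ly :: "real \<times> real \<Rightarrow> real"
    and a b \<alpha> \<beta> :: real and \<gamma> :: "real \<Rightarrow> real"
  assumes cd: "ereal c < d"
    and J: "is_interval J" "open J" "J \<noteq> {}"
    and O_def: "Om = {x. c < x \<and> ereal x < d} \<times> J"
    and C1: "C1_on Om L Lx Ly"
    and ab: "a < b"
    and Ly_bdd: "\<exists>M. \<forall>p\<in>Om. \<bar>Ly p\<bar> \<le> M"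
    and conv: "convex_L Om L Lx Ly"
    and gam: "\<gamma> \<in> admissible a b \<alpha> \<beta> Om L"
    and EL: "\<forall>t\<in>{a<..b}.
       ((\<lambda>s. Ly (\<gamma> s, dgam a b \<gamma> s)) has_real_derivative Lx (\<gamma> t, dgam a b \<gamma> t))
         (at t within {a<..b})"
  shows "(\<forall>\<eta>\<in>admissible a b \<alpha> \<beta> Om L. action a b L \<gamma> \<le> action a b L \<eta>)
    \<and> (strictly_convex_L Om L Lx Ly \<longrightarrow>
         (\<forall>\<eta>\<in>admissible a b \<alpha> \<beta> Om L. action a b L \<eta> \<le> action a b L \<gamma>
              \<longrightarrow> (\<forall>t\<in>{a..b}. \<eta> t = \<gamma> t)))"
proof -
  obtain M where M: "\<forall>p\<in>Om. \<bar>Ly p\<bar> \<le> M" using Ly_bdd by blast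
  have "admissible_variation Om L Lx Ly a b \<alpha> \<beta> \<gamma> \<eta>"
    if "\<eta> \<in> admissible a b \<alpha> \<beta> Om L" for \<eta>
    using C1 gam that EL by unfold_locales
  with admissible_variation.action_le_action[OF _ conv M ab]
    admissible_variation.eq_if_action_le_action[OF _ _ M ab]
  show ?thesis by blast
qed

end
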